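(* Let $K_c=\operatorname{conv}\big(\mathbb{S}^{d-1}\cup\{\boldsymbol v_i\mid i\in I\}\big)\subset\mathbb{E}^d$ be a cap body and let $i\in I$. A direction $\boldsymbol u\in\mathbb{S}^{d-1}$ illuminates the vertex $\boldsymbol v_i$ of $K_c$ if and only if $\langle\boldsymbol v_i,\boldsymbol u\rangle<-\sqrt{\|\boldsymbol v_i\|^2-1}$.
   Context: $\mathbb{S}^{d-1}$ is the unit sphere centred at the origin and $B^d$ the closed unit ball. A cap body is $\operatorname{conv}(\mathbb{S}^{d-1}\cup\{\boldsymbol v_i\mid i\in I\})$ where $\{\boldsymbol v_i\}$ is a countable subset of $\mathbb{E}^d\setminus B^d$ such that for distinct $i,j$ the segment $\overline{\boldsymbol v_i\boldsymbol v_j}$ intersects $B^d$; the points $\boldsymbol v_i$ are its vertices. A direction $\boldsymbol u\in\mathbb{S}^{d-1}$ illuminates a boundary point $\boldsymbol p$ of a convex body $K$ if $\boldsymbol p+\lambda\boldsymbol u$ is in the interior of $K$ for some $\lambda>0$. *)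

theory Defs
  imports "HOL-Analysis.Analysis"
begin

definition cap_vertices :: "'a::euclidean_space set \<Rightarrow> bool" where
  "cap_vertices V \<longleftrightarrow> countable V \<and> V \<inter> cball 0 1 = {} \<and>
     (\<forall>v\<in>V. \<forall>w\<in>V. v \<noteq> w \<longrightarrow> closed_segment v w \<inter> cball 0 1 \<noteq> {})"

definition cap_body :: "'a::euclidean_space set \<Rightarrow> 'a set" where
  "cap_body V = convex hull (sphere 0 1 \<union> V)"

definition illuminates :: "'a::euclidean_space set \<Rightarrow> 'a \<Rightarrow> 'a \<Rightarrow> bool" where
  "illuminates K u p \<longleftrightarrow> p \<in> frontier K \<and> (\<exists>t>0. p + t *\<^sub>R u \<in> interior K)"

end

theory Submission
  imports Defs
begin

text \<open>A halfspace \<open>{x. n \<bullet> x \<le> n \<bullet> v}\<close> with \<open>|n| \<le> n \<bullet> v\<close> contains the unit ball, hence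
also every other vertex \<open>w\<close>: the segment from \<open>v\<close> to \<open>w\<close> meets the ball at a point
\<open>v + r (w - v)\<close> with \<open>r > 0\<close>, so \<open>n \<bullet> (w - v) \<le> 0\<close>. Such a halfspace therefore contains the
cap body and has \<open>v\<close> on its boundary, so no direction \<open>u\<close> with \<open>n \<bullet> u \<ge> 0\<close> illuminates \<open>v\<close>.
If \<open>v \<bullet> u \<ge> 0\<close> take \<open>n = v\<close>; otherwise take the component \<open>n = v - (v \<bullet> u) u\<close> of \<open>v\<close>
orthogonal to \<open>u\<close>, for which \<open>n \<bullet> v = |n|\<^sup>2 = |v|\<^sup>2 - (v \<bullet> u)\<^sup>2\<close>; this is at least 1 exactly
when \<open>v \<bullet> u \<ge> -sqrt(|v|\<^sup>2 - 1)\<close>. Conversely, if \<open>v \<bullet> u < -sqrt(|v|\<^sup>2 - 1)\<close>, the point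
\<open>v - (v \<bullet> u) u\<close> has norm less than 1, so it lies in the open unit ball, which is interior
to the cap body.\<close>

lemma convex_hull_sphere:
  fixes a :: "'a::euclidean_space"
  shows "convex hull (sphere a r) = cball a r"
  using Krein_Milman_frontier[OF convex_cball compact_cball, of a r] by simp

lemma ball_subset_interior_cap_body: "ball 0 1 \<subseteq> interior (cap_body V)"
proof (rule interior_maximal)
  have "cball 0 1 \<subseteq> cap_body V"
    unfolding cap_body_def convex_hull_sphere[symmetric]
    by (rule hull_mono) blast
  then show "ball 0 1 \<subseteq> cap_body V"
    using ball_subset_cball by blast
qed simp

lemma inner_le_of_mem_unit_cball:
  fixes x n :: "'a::real_inner"
  assumes "x \<in> cball 0 1" and "norm n \<le> c"
  shows "n \<bullet> x \<le> c"
proof -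
  have "n \<bullet> x \<le> norm n * norm x"
    by (rule norm_cauchy_schwarz)
  also have "\<dots> \<le> norm n"
    using assms(1) mult_left_le[of "norm x" "norm n"] by simp
  finally show ?thesis
    using assms(2) by simp
qed

lemma cap_vertices_segment_meets_cball:
  assumes "cap_vertices V" and "v \<in> V" and "w \<in> V" and "v \<noteq> w"
  shows "closed_segment v w \<inter> cball 0 1 \<noteq> {}"
  using assms unfolding cap_vertices_def by simp

lemma cap_vertices_norm_gt_1:
  assumes "cap_vertices V" and "v \<in> V"
  shows "1 < norm v"
proof -
  have "v \<notin> cball 0 1"
    using assms unfolding cap_vertices_def by blast
  then show ?thesis
    by simp
qed

lemma cap_body_subset_halfspace:
  fixes V :: "'a::euclidean_space set"
  assumes cap: "cap_vertices V" and "v \<in> V" and n: "norm n \<le> n \<bullet> v"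
  shows "cap_body V \<subseteq> {x. n \<bullet> x \<le> n \<bullet> v}"
proof -
  have "n \<bullet> w \<le> n \<bullet> v" if "w \<in> V" and "w \<noteq> v" for w
  proof -
    obtain b where "b \<in> closed_segment v w" and b: "b \<in> cball 0 1"
      using cap_vertices_segment_meets_cball[OF cap \<open>v \<in> V\<close> \<open>w \<in> V\<close> \<open>w \<noteq> v\<close>[symmetric]] by blast
    then obtain r where "0 \<le> r" and b_eq: "b = (1 - r) *\<^sub>R v + r *\<^sub>R w"
      unfolding in_segment by blast
    have "r \<noteq> 0"
      using b b_eq cap_vertices_norm_gt_1[OF cap \<open>v \<in> V\<close>] by auto
    have "n \<bullet> v + r * (n \<bullet> (w - v)) = n \<bullet> b"
      unfolding b_eq by (simp add: inner_diff_right algebra_simps)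
    also have "\<dots> \<le> n \<bullet> v"
      by (rule inner_le_of_mem_unit_cball[OF b n])
    finally have "n \<bullet> (w - v) \<le> 0"
      using \<open>0 \<le> r\<close> \<open>r \<noteq> 0\<close> by (simp add: mult_le_0_iff)
    then show ?thesis
      by (simp add: inner_diff_right)
  qed
  moreover have "n \<bullet> x \<le> n \<bullet> v" if "x \<in> sphere 0 1" for x
    using that by (intro inner_le_of_mem_unit_cball[OF _ n]) simp
  ultimately have "sphere 0 1 \<union> V \<subseteq> {x. n \<bullet> x \<le> n \<bullet> v}"
    by auto
  then show ?thesis
    unfolding cap_body_def by (rule hull_minimal) (rule convex_halfspace_le)
qed

lemma not_in_interior_beyond_support:
  fixes K :: "'a::euclidean_space set"
  assumes "K \<subseteq> {x. n \<bullet> x \<le> n \<bullet> p}" and "n \<noteq> 0" and "0 \<le> n \<bullet> u" and "0 \<le> t"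
  shows "p + t *\<^sub>R u \<notin> interior K"
proof
  assume "p + t *\<^sub>R u \<in> interior K"
  then have "n \<bullet> (p + t *\<^sub>R u) < n \<bullet> p"
    using interior_mono[OF assms(1)] interior_halfspace_le[OF assms(2)] by auto
  moreover have "n \<bullet> p \<le> n \<bullet> (p + t *\<^sub>R u)"
    using assms(3,4) by (simp add: inner_add_right)
  ultimately show False
    by simp
qed

lemma norm_le_inner_self:
  fixes v :: "'a::real_inner"
  assumes "1 \<le> norm v"
  shows "norm v \<le> v \<bullet> v"
  using assms mult_left_mono[of 1 "norm v" "norm v"] by (simp add: dot_square_norm power2_eq_square)

lemma vertex_in_frontier_cap_body:
  assumes "cap_vertices V" and "v \<in> V"
  shows "v \<in> frontier (cap_body V)"
proof -
  have "1 < norm v"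
    using cap_vertices_norm_gt_1[OF assms] .
  then have "norm v \<le> v \<bullet> v"
    by (simp add: norm_le_inner_self)
  moreover have "v \<noteq> 0"
    using \<open>1 < norm v\<close> by auto
  ultimately have "v \<notin> interior (cap_body V)"
    using not_in_interior_beyond_support[OF cap_body_subset_halfspace[OF assms], where u = v and t = 0]
    by simp
  moreover have "v \<in> cap_body V"
    unfolding cap_body_def using assms(2) by (simp add: hull_inc)
  ultimately show ?thesis
    unfolding frontier_def using closure_subset by auto
qed

lemma norm_diff_projection_sq:
  fixes v u :: "'a::real_inner"
  assumes "norm u = 1"
  shows "(norm (v - (v \<bullet> u) *\<^sub>R u))\<^sup>2 = (norm v)\<^sup>2 - (v \<bullet> u)\<^sup>2"
proof -
  have "u \<bullet> u = 1"
    using assms by (simp add: dot_square_norm)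
  then show ?thesis
    unfolding power2_norm_eq_inner
    by (simp add: inner_diff_left inner_diff_right inner_commute power2_eq_square)
qed

lemma exists_supporting_normal:
  fixes v u :: "'a::real_inner"
  assumes "norm u = 1" and "1 < norm v" and "- sqrt ((norm v)\<^sup>2 - 1) \<le> v \<bullet> u"
  obtains n where "n \<noteq> 0" and "norm n \<le> n \<bullet> v" and "0 \<le> n \<bullet> u"
proof (cases "0 \<le> v \<bullet> u")
  case True
  have "norm v \<le> v \<bullet> v"
    using assms(2) by (simp add: norm_le_inner_self)
  moreover have "v \<noteq> 0"
    using assms(2) by auto
  ultimately show ?thesis
    using True by (intro that[of v]) (simp_all add: inner_commute)
next
  case False
  define n where "n = v - (v \<bullet> u) *\<^sub>R u"
  have "- (v \<bullet> u) \<le> sqrt ((norm v)\<^sup>2 - 1)"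
    using assms(3) by simp
  then have "(- (v \<bullet> u))\<^sup>2 \<le> (sqrt ((norm v)\<^sup>2 - 1))\<^sup>2"
    using False by (intro power_mono) auto
  then have "1 \<le> (norm n)\<^sup>2"
    using assms(2) unfolding n_def norm_diff_projection_sq[OF assms(1)] by simp
  then have "1 \<le> norm n"
    using power2_le_imp_le[of 1 "norm n"] by simp
  have "n \<bullet> u = 0"
    using assms(1) by (simp add: n_def inner_diff_left dot_square_norm)
  then have "n \<bullet> v = n \<bullet> n"
    by (simp add: n_def inner_diff_right)
  then have "norm n \<le> n \<bullet> v"
    using norm_le_inner_self[OF \<open>1 \<le> norm n\<close>] by simp
  moreover have "n \<noteq> 0"
    using \<open>1 \<le> norm n\<close> by auto
  ultimately show ?thesis
    using \<open>n \<bullet> u = 0\<close> by (intro that) auto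
qed

lemma diff_projection_in_unit_ball:
  fixes v u :: "'a::real_inner"
  assumes "norm u = 1" and "1 < norm v" and below: "v \<bullet> u < - sqrt ((norm v)\<^sup>2 - 1)"
  shows "0 < - (v \<bullet> u)" and "v - (v \<bullet> u) *\<^sub>R u \<in> ball 0 1"
proof -
  have "0 \<le> sqrt ((norm v)\<^sup>2 - 1)"
    using assms(2) by auto
  with below show "0 < - (v \<bullet> u)"
    by linarith
  have "(sqrt ((norm v)\<^sup>2 - 1))\<^sup>2 < (- (v \<bullet> u))\<^sup>2"
    using below \<open>0 \<le> sqrt ((norm v)\<^sup>2 - 1)\<close> by (intro power_strict_mono) auto
  then have "(norm (v - (v \<bullet> u) *\<^sub>R u))\<^sup>2 < 1\<^sup>2"
    using assms(2) unfolding norm_diff_projection_sq[OF assms(1)] by simp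
  then show "v - (v \<bullet> u) *\<^sub>R u \<in> ball 0 1"
    using power2_less_imp_less[of "norm (v - (v \<bullet> u) *\<^sub>R u)" 1] by simp
qed

theorem lemma1:
  fixes V :: "'a::euclidean_space set" and v u :: 'a
  assumes "cap_vertices V" and "v \<in> V" and "u \<in> sphere 0 1"
  shows "illuminates (cap_body V) u v \<longleftrightarrow> v \<bullet> u < - sqrt ((norm v)\<^sup>2 - 1)"
proof
  assume "illuminates (cap_body V) u v"
  then obtain t where "0 < t" and "v + t *\<^sub>R u \<in> interior (cap_body V)"
    unfolding illuminates_def by blast
  moreover have "v + t *\<^sub>R u \<notin> interior (cap_body V)"
    if not_below: "- sqrt ((norm v)\<^sup>2 - 1) \<le> v \<bullet> u"
  proof -
    obtain n where "n \<noteq> 0" and n: "norm n \<le> n \<bullet> v" and "0 \<le> n \<bullet> u"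
      using assms(3) exists_supporting_normal[OF _ cap_vertices_norm_gt_1[OF assms(1,2)] not_below] by auto
    with \<open>0 < t\<close> show ?thesis
      using not_in_interior_beyond_support[OF cap_body_subset_halfspace[OF assms(1,2) n]] by simp
  qed
  ultimately show "v \<bullet> u < - sqrt ((norm v)\<^sup>2 - 1)"
    by (meson not_less)
next
  assume "v \<bullet> u < - sqrt ((norm v)\<^sup>2 - 1)"
  with assms cap_vertices_norm_gt_1[OF assms(1,2)]
  have "0 < - (v \<bullet> u)" and "v + (- (v \<bullet> u)) *\<^sub>R u \<in> ball 0 1"
    using diff_projection_in_unit_ball by auto
  then show "illuminates (cap_body V) u v"
    unfolding illuminates_def
    using vertex_in_frontier_cap_body[OF assms(1,2)] ball_subset_interior_cap_body by blast
qed

end
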